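(* Let $\mathcal{F}\subseteq\mathcal{O}$ be a normal family of objects and let $(M_p)_{p\in\mathcal{F}}$ be the Voronoi partition of $V(G)$ with respect to $\mathcal{F}$. Then for every $p\in\mathcal{F}$ we have $\mathrm{loc}(p)\subseteq M_p$.
   Context: $G$ is a connected graph with positive edge weights; $\mathrm{dist}(X,Y)$ denotes the minimum weight of a path between a vertex of $X$ and a vertex of $Y$. Each object $p\in\mathcal{O}$ has a location $\mathrm{loc}(p)$, a nonempty vertex set inducing a connected subgraph, and a radius $\mathrm{rad}(p)\ge 0$. A family $\mathcal{F}$ is normal if locations of its members are pairwise disjoint and $\mathrm{dist}(\mathrm{loc}(p_1),\mathrm{loc}(p_2))>\mathrm{rad}(p_1)-\mathrm{rad}(p_2)$ for all ordered pairs of distinct $p_1,p_2\in\mathcal{F}$. Standing assumption: all values $\mathrm{dist}(u,v)$ and $\mathrm{dist}(u,v)-\mathrm{rad}(p)$ ($u,v\in V(G)$, $p\in\mathcal{O}$) are pairwise different and shortest paths are unique, so there are no ties. The Voronoi partition assigns $v\in V(G)$ to $M_{p_0}$ iff $\mathrm{dist}(v,\mathrm{loc}(p_0))-\mathrm{rad}(p_0)$ is the smallest among the values $\mathrm{dist}(v,\mathrm{loc}(p))-\mathrm{rad}(p)$, $p\in\mathcal{F}$. *)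

theory Defs
  imports Complex_Main
begin

definition walk :: "('v \<times> 'v) set \<Rightarrow> 'v list \<Rightarrow> bool" where
  "walk E xs \<longleftrightarrow> xs \<noteq> [] \<and> (\<forall>i. Suc i < length xs \<longrightarrow> (xs ! i, xs ! Suc i) \<in> E)"

definition walk_weight :: "('v \<Rightarrow> 'v \<Rightarrow> real) \<Rightarrow> 'v list \<Rightarrow> real" where
  "walk_weight w xs = (\<Sum>i<length xs - 1. w (xs ! i) (xs ! Suc i))"

definition wgraph :: "'v set \<Rightarrow> ('v \<times> 'v) set \<Rightarrow> ('v \<Rightarrow> 'v \<Rightarrow> real) \<Rightarrow> bool" where
  "wgraph V E w \<longleftrightarrow> finite V \<and> V \<noteq> {} \<and> E \<subseteq> V \<times> V \<and> sym E \<and>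
     (\<forall>(u,v)\<in>E. w u v > 0 \<and> w u v = w v u)"

definition induces_connected :: "('v \<times> 'v) set \<Rightarrow> 'v set \<Rightarrow> bool" where
  "induces_connected E S \<longleftrightarrow> (\<forall>u\<in>S. \<forall>v\<in>S. \<exists>xs. walk E xs \<and> set xs \<subseteq> S \<and> hd xs = u \<and> last xs = v)"

text \<open>Minimum weight of a path (equivalently walk, weights being positive) between two vertices.\<close>
definition vdist :: "('v \<times> 'v) set \<Rightarrow> ('v \<Rightarrow> 'v \<Rightarrow> real) \<Rightarrow> 'v \<Rightarrow> 'v \<Rightarrow> real" where
  "vdist E w u v = Inf {walk_weight w xs | xs. walk E xs \<and> hd xs = u \<and> last xs = v}"

definition setdist :: "('v \<times> 'v) set \<Rightarrow> ('v \<Rightarrow> 'v \<Rightarrow> real) \<Rightarrow> 'v set \<Rightarrow> 'v set \<Rightarrow> real" where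
  "setdist E w X Y = Inf {vdist E w u v | u v. u \<in> X \<and> v \<in> Y}"

definition normal_family :: "('v \<times> 'v) set \<Rightarrow> ('v \<Rightarrow> 'v \<Rightarrow> real) \<Rightarrow> ('o \<Rightarrow> 'v set) \<Rightarrow> ('o \<Rightarrow> real) \<Rightarrow> 'o set \<Rightarrow> bool" where
  "normal_family E w loc rad F \<longleftrightarrow>
     (\<forall>p1\<in>F. \<forall>p2\<in>F. p1 \<noteq> p2 \<longrightarrow> loc p1 \<inter> loc p2 = {} \<and>
        setdist E w (loc p1) (loc p2) > rad p1 - rad p2)"

definition voronoi_cell :: "'v set \<Rightarrow> ('v \<times> 'v) set \<Rightarrow> ('v \<Rightarrow> 'v \<Rightarrow> real) \<Rightarrow> ('o \<Rightarrow> 'v set) \<Rightarrow> ('o \<Rightarrow> real) \<Rightarrow> 'o set \<Rightarrow> 'o \<Rightarrow> 'v set" where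
  "voronoi_cell V E w loc rad F p0 =
     {v \<in> V. \<forall>p\<in>F. setdist E w {v} (loc p0) - rad p0 \<le> setdist E w {v} (loc p) - rad p}"

end

theory Submission
  imports Defs
begin

text \<open>A vertex v of loc p has distance 0 to loc p, so its value for p is -rad p. For any other
  q in F, the walk from v to loc q starts in loc p, so dist(v, loc q) \<ge> dist(loc q, loc p)
  > rad q - rad p by normality.\<close>

lemma walk_rev:
  assumes "sym E" "walk E xs"
  shows "walk E (rev xs)"
  unfolding walk_def
proof (intro conjI allI impI)
  show "rev xs \<noteq> []" using assms(2) unfolding walk_def by simp
next
  fix i assume i: "Suc i < length (rev xs)"
  define n where "n = length xs"
  have "(xs ! (n - 2 - i), xs ! Suc (n - 2 - i)) \<in> E"
    using assms(2) i unfolding walk_def n_def by auto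
  moreover have "Suc (n - 2 - i) = n - 1 - i" "n - 2 - i = n - 1 - Suc i"
    using i n_def by auto
  ultimately have "(xs ! (n - 1 - Suc i), xs ! (n - 1 - i)) \<in> E" by simp
  then show "(rev xs ! i, rev xs ! Suc i) \<in> E"
    using assms(1) i n_def by (auto simp: rev_nth dest: symD)
qed

lemma walk_weight_nonneg:
  assumes "wgraph V E w" "walk E xs"
  shows "walk_weight w xs \<ge> 0"
  unfolding walk_weight_def
proof (intro sum_nonneg)
  fix i assume "i \<in> {..<length xs - 1}"
  then have "(xs ! i, xs ! Suc i) \<in> E" using assms(2) unfolding walk_def by auto
  then show "w (xs ! i) (xs ! Suc i) \<ge> 0" using assms(1) unfolding wgraph_def by fastforce
qed

lemma walk_weight_rev:
  assumes "wgraph V E w" "walk E xs"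
  shows "walk_weight w (rev xs) = walk_weight w xs"
proof -
  define n where "n = length xs"
  have "walk_weight w (rev xs) = (\<Sum>i<n - 1. w (xs ! (n - 1 - i)) (xs ! (n - 1 - Suc i)))"
    unfolding walk_weight_def n_def by (intro sum.cong) (auto simp: rev_nth)
  also have "\<dots> = (\<Sum>j<n - 1. w (xs ! j) (xs ! Suc j))"
  proof (rule sum.reindex_bij_witness[of _ "\<lambda>i. n - 2 - i" "\<lambda>i. n - 2 - i"])
    fix a assume a: "a \<in> {..<n - 1}"
    define j where "j = n - 2 - a"
    have "(xs ! j, xs ! Suc j) \<in> E"
      using a assms(2) unfolding walk_def n_def j_def by auto
    then have "w (xs ! Suc j) (xs ! j) = w (xs ! j) (xs ! Suc j)"
      using assms(1) unfolding wgraph_def by fastforce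
    moreover have "n - 1 - a = Suc j" "n - 1 - Suc a = j" using a j_def by auto
    ultimately show "w (xs ! (n - 2 - a)) (xs ! Suc (n - 2 - a))
        = w (xs ! (n - 1 - a)) (xs ! (n - 1 - Suc a))"
      using j_def by simp
  qed auto
  finally show ?thesis unfolding walk_weight_def n_def by simp
qed

lemma vdist_commute:
  assumes "wgraph V E w"
  shows "vdist E w u v = vdist E w v u"
proof -
  have "sym E" using assms unfolding wgraph_def by auto
  have reverse: "walk_weight w xs \<in> {walk_weight w ys | ys. walk E ys \<and> hd ys = b \<and> last ys = a}"
    if "walk E xs" "hd xs = a" "last xs = b" for xs a b
    using that walk_weight_rev[OF assms] walk_rev[OF \<open>sym E\<close>]
    by (intro CollectI exI[of _ "rev xs"]) (auto simp: hd_rev last_rev walk_def)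
  have "{walk_weight w xs | xs. walk E xs \<and> hd xs = u \<and> last xs = v}
      = {walk_weight w xs | xs. walk E xs \<and> hd xs = v \<and> last xs = u}"
    using reverse by blast
  then show ?thesis unfolding vdist_def by simp
qed

lemma vdist_nonneg:
  assumes "wgraph V E w" "induces_connected E V" "u \<in> V" "v \<in> V"
  shows "vdist E w u v \<ge> 0"
proof -
  obtain xs where "walk E xs" "hd xs = u" "last xs = v"
    using assms(2-4) unfolding induces_connected_def by blast
  then show ?thesis unfolding vdist_def
    by (intro cInf_greatest) (auto intro: walk_weight_nonneg[OF assms(1)])
qed

lemma vdist_self:
  assumes "wgraph V E w"
  shows "vdist E w v v = 0"
  unfolding vdist_def
proof (rule cInf_eq_minimum)
  show "0 \<in> {walk_weight w xs | xs. walk E xs \<and> hd xs = v \<and> last xs = v}"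
    by (intro CollectI exI[of _ "[v]"]) (auto simp: walk_def walk_weight_def)
qed (auto intro: walk_weight_nonneg[OF assms])

lemma setdist_le_vdist:
  assumes "wgraph V E w" "induces_connected E V" "X \<subseteq> V" "Y \<subseteq> V" "u \<in> X" "v \<in> Y"
  shows "setdist E w X Y \<le> vdist E w u v"
  unfolding setdist_def
proof (rule cInf_lower)
  show "bdd_below {vdist E w u v | u v. u \<in> X \<and> v \<in> Y}"
    using vdist_nonneg[OF assms(1,2)] assms(3,4) by (intro bdd_belowI[of _ 0]) auto
qed (use assms(5,6) in auto)

lemma setdist_singleton_self:
  assumes "wgraph V E w" "induces_connected E V" "X \<subseteq> V" "v \<in> X"
  shows "setdist E w {v} X = 0"
  unfolding setdist_def
proof (rule cInf_eq_minimum)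
  show "0 \<in> {vdist E w u u' | u u'. u \<in> {v} \<and> u' \<in> X}"
    using assms(4) vdist_self[OF assms(1)] by force
qed (use vdist_nonneg[OF assms(1,2)] assms(3,4) in auto)

lemma setdist_le_setdist_singleton:
  assumes "wgraph V E w" "induces_connected E V" "X \<subseteq> V" "X \<noteq> {}" "Y \<subseteq> V" "v \<in> Y"
  shows "setdist E w X Y \<le> setdist E w {v} X"
  unfolding setdist_def[of E w "{v}"]
proof (rule cInf_greatest)
  show "{vdist E w u u' | u u'. u \<in> {v} \<and> u' \<in> X} \<noteq> {}" using assms(4) by auto
next
  fix d assume "d \<in> {vdist E w u u' | u u'. u \<in> {v} \<and> u' \<in> X}"
  then obtain u where "u \<in> X" "d = vdist E w u v"
    using vdist_commute[OF assms(1)] by auto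
  then show "setdist E w X Y \<le> d" using setdist_le_vdist[OF assms(1,2,3,5)] assms(6) by simp
qed

theorem lemma4p1:
  fixes V :: "'v set" and E :: "('v \<times> 'v) set" and w :: "'v \<Rightarrow> 'v \<Rightarrow> real"
    and loc :: "'o \<Rightarrow> 'v set" and rad :: "'o \<Rightarrow> real" and Obj F :: "'o set"
  assumes graph: "wgraph V E w"
    and connected: "induces_connected E V"
    and objects: "\<forall>p\<in>Obj. loc p \<noteq> {} \<and> loc p \<subseteq> V \<and> induces_connected E (loc p) \<and> rad p \<ge> 0"
    and no_ties: "\<forall>v\<in>V. \<forall>p\<in>Obj. \<forall>q\<in>Obj. p \<noteq> q \<longrightarrow>
                    setdist E w {v} (loc p) - rad p \<noteq> setdist E w {v} (loc q) - rad q"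
    and sub: "F \<subseteq> Obj"
    and normal: "normal_family E w loc rad F"
    and p: "p \<in> F"
  shows "loc p \<subseteq> voronoi_cell V E w loc rad F p"
proof
  fix v assume v: "v \<in> loc p"
  have loc: "loc q \<subseteq> V" "loc q \<noteq> {}" if "q \<in> F" for q using objects sub that by auto
  have "v \<in> V" using v loc(1)[OF p] by auto
  have own: "setdist E w {v} (loc p) = 0"
    using setdist_singleton_self[OF graph connected loc(1)[OF p] v] .
  have other: "- rad p \<le> setdist E w {v} (loc q) - rad q" if q: "q \<in> F" "q \<noteq> p" for q
  proof -
    have "rad q - rad p < setdist E w (loc q) (loc p)"
      using normal q p unfolding normal_family_def by auto
    also have "\<dots> \<le> setdist E w {v} (loc q)"
      using setdist_le_setdist_singleton[OF graph connected loc[OF q(1)] loc(1)[OF p] v] .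
    finally show ?thesis by simp
  qed
  show "v \<in> voronoi_cell V E w loc rad F p"
    unfolding voronoi_cell_def using own other \<open>v \<in> V\<close> by fastforce
qed

end
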